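(* There is an absolute constant $C>0$ such that for all sufficiently large positive integers $n\le m$ the following holds. For every fixed $\mathbf{y}\in\mathbb{C}^m$, if $\mathbf{x}\sim CN(0,\mathbf{I}_{m\times m}/m)$, then with probability at least $1-m\exp(-n/6)$, \[ \frac1m\|\mathrm{phase}(\mathbf{x}+\mathbf{y})-\mathrm{phase}(\mathbf{x})\|_1\le C\log m\,\max\Big(\|\mathbf{y}\|,\frac nm\Big). \]
   Context: For $z\in\mathbb{C}\setminus\{0\}$, $\mathrm{phase}(z)=z/|z|$, and for a vector $\mathrm{phase}$ acts entrywise. $\|\cdot\|_1$ is the sum of moduli of entries and $\|\cdot\|$ the Euclidean norm. $CN(0,\Sigma)$ is the complex normal distribution with real and imaginary parts independent $N(0,\Sigma/2)$. *)

theory Defs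
  imports "HOL-Probability.Probability"
begin

definition complex_normal :: "real \<Rightarrow> complex measure" where
  "complex_normal v =
     distr (density lborel (normal_density 0 (sqrt (v/2)))
              \<Otimes>\<^sub>M density lborel (normal_density 0 (sqrt (v/2))))
           borel (\<lambda>(a, b). Complex a b)"

text \<open>The distribution CN(0, I_m/m) on C^m; vectors in C^m are represented as
  functions nat \<Rightarrow> complex on the index set {..<m}.\<close>
definition gauss_vec :: "nat \<Rightarrow> (nat \<Rightarrow> complex) measure" where
  "gauss_vec m = (\<Pi>\<^sub>M i\<in>{..<m}. complex_normal (1 / real m))"

text \<open>phase z = z/|z|, i.e. sgn (with the convention sgn 0 = 0).\<close>
definition phase :: "complex \<Rightarrow> complex" where
  "phase z = z / complex_of_real (cmod z)"

definition norm1 :: "nat \<Rightarrow> (nat \<Rightarrow> complex) \<Rightarrow> real" where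
  "norm1 m v = (\<Sum>i<m. cmod (v i))"

definition norm2 :: "nat \<Rightarrow> (nat \<Rightarrow> complex) \<Rightarrow> real" where
  "norm2 m v = sqrt (\<Sum>i<m. (cmod (v i))\<^sup>2)"

end

theory Submission
  imports Defs
begin

text \<open>Let \<open>Z\<^sub>i = |phase (x\<^sub>i + y\<^sub>i) - phase x\<^sub>i|\<close>. Always \<open>Z\<^sub>i \<le> 2\<close> and
  \<open>Z\<^sub>i \<le> 2 |y\<^sub>i| / |x\<^sub>i|\<close>, and a \<open>CN(0, 1/m)\<close> variable lies in a disc of radius \<open>\<rho>\<close>
  with probability at most \<open>4 m \<rho>\<^sup>2\<close>. Applying the second bound on the dyadic shells
  \<open>2^-(k+1) / sqrt m \<le> |x\<^sub>i| < 2^-k / sqrt m\<close>, \<open>k < m\<close>, and the first one inside the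
  innermost disc gives \<open>E exp Z\<^sub>i \<le> exp (9 (34 sqrt m |y\<^sub>i| + 8 / 4^m))\<close>. By independence,
  the exponential Markov inequality and \<open>\<Sum> |y\<^sub>i| \<le> sqrt m \<parallel>y\<parallel>\<close>, the sum \<open>\<Sum> Z\<^sub>i\<close>
  exceeds \<open>306 m \<parallel>y\<parallel> + 72 + n / 6\<close> with probability at most \<open>exp (- n / 6)\<close>.\<close>

lemma measurable_Complex_density_pair [measurable]:
  "(\<lambda>(a, b). Complex a b) \<in> borel_measurable (density lborel f \<Otimes>\<^sub>M density lborel g)"
proof -
  have "sets (density lborel f \<Otimes>\<^sub>M density lborel g) = sets (borel \<Otimes>\<^sub>M borel)"
    by (intro sets_pair_measure_cong) auto
  then show ?thesis
    by (simp cong: measurable_cong_sets add: borel_measurable_complex_iff case_prod_beta')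
qed

lemma sets_complex_normal [measurable_cong]: "sets (complex_normal v) = sets borel"
  by (simp add: complex_normal_def)

lemma space_complex_normal [simp]: "space (complex_normal v) = UNIV"
  by (simp add: complex_normal_def)

lemma prob_space_complex_normal: "v > 0 \<Longrightarrow> prob_space (complex_normal v)"
  unfolding complex_normal_def
  by (intro prob_space.prob_space_distr prob_space_pair prob_space_normal_density) auto

lemma emeasure_normal_density_interval_le:
  assumes "\<sigma> > 0" "r \<ge> 0"
  shows "emeasure (density lborel (normal_density 0 \<sigma>)) {-r<..<r} \<le> ennreal (2 * r / sqrt (2 * pi * \<sigma>\<^sup>2))"
proof -
  let ?c = "1 / sqrt (2 * pi * \<sigma>\<^sup>2)"
  have "normal_density 0 \<sigma> x \<le> ?c" for x
    using mult_left_mono[of "exp (- x\<^sup>2 / (2 * \<sigma>\<^sup>2))" 1 ?c] by (simp add: normal_density_def)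
  then have "emeasure (density lborel (normal_density 0 \<sigma>)) {-r<..<r}
      \<le> (\<integral>\<^sup>+ x. ennreal ?c * indicator {-r<..<r} x \<partial>lborel)"
    by (subst emeasure_density) (auto intro!: nn_integral_mono ennreal_leI simp: indicator_def)
  also have "\<dots> = ennreal ?c * ennreal (2 * r)"
    using assms by (simp add: nn_integral_cmult_indicator emeasure_lborel_Ioo)
  also have "\<dots> = ennreal (?c * (2 * r))"
    using assms by (intro ennreal_mult[symmetric]) auto
  finally show ?thesis by simp
qed

lemma measure_complex_normal_disc_le:
  assumes v: "v > 0" and r: "r \<ge> 0"
  shows "measure (complex_normal v) {z. cmod z < r} \<le> 4 * r\<^sup>2 / (pi * v)"
proof -
  let ?N = "density lborel (normal_density 0 (sqrt (v / 2)))"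
  interpret N: prob_space ?N using v by (intro prob_space_normal_density) auto
  interpret prob_space "complex_normal v" using v by (rule prob_space_complex_normal)
  have "(\<lambda>(a, b). Complex a b) -` {z. cmod z < r} \<subseteq> {-r<..<r} \<times> {-r<..<r}"
  proof
    fix p :: "real \<times> real"
    assume "p \<in> (\<lambda>(a, b). Complex a b) -` {z. cmod z < r}"
    then have "cmod (Complex (fst p) (snd p)) < r"
      by (simp add: case_prod_beta)
    then have "\<bar>fst p\<bar> < r \<and> \<bar>snd p\<bar> < r"
      using abs_Re_le_cmod[of "Complex (fst p) (snd p)"] abs_Im_le_cmod[of "Complex (fst p) (snd p)"]
      by simp
    then show "p \<in> {-r<..<r} \<times> {-r<..<r}"
      by (simp add: mem_Times_iff abs_less_iff)
  qed
  then have "(\<lambda>(a, b). Complex a b) -` {z. cmod z < r} \<inter> space (?N \<Otimes>\<^sub>M ?N) \<subseteq> {-r<..<r} \<times> {-r<..<r}"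
    by blast
  then have "emeasure (complex_normal v) {z. cmod z < r} \<le> emeasure (?N \<Otimes>\<^sub>M ?N) ({-r<..<r} \<times> {-r<..<r})"
    unfolding complex_normal_def by (subst emeasure_distr) (auto intro: emeasure_mono)
  also have "\<dots> = emeasure ?N {-r<..<r} * emeasure ?N {-r<..<r}"
    by (rule N.emeasure_pair_measure_Times) auto
  also have "\<dots> \<le> ennreal (2 * r / sqrt (pi * v)) * ennreal (2 * r / sqrt (pi * v))"
    using emeasure_normal_density_interval_le[of "sqrt (v / 2)" r] v r
    by (intro mult_mono) (auto simp: real_sqrt_mult)
  also have "\<dots> = ennreal (2 * r / sqrt (pi * v) * (2 * r / sqrt (pi * v)))"
    using v r by (intro ennreal_mult[symmetric]) auto
  also have "2 * r / sqrt (pi * v) * (2 * r / sqrt (pi * v)) = 4 * r\<^sup>2 / (pi * v)"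
    using v by (simp add: power2_eq_square)
  finally show ?thesis
    using v r by (simp add: emeasure_eq_measure ennreal_le_iff)
qed

lemma phase_eq_sgn: "phase z = sgn z"
  by (simp add: phase_def sgn_div_norm scaleR_conv_of_real divide_inverse mult.commute)

lemma norm_sgn_diff_le_2:
  fixes u x :: "'a :: real_normed_vector"
  shows "norm (sgn u - sgn x) \<le> 2"
proof -
  have norm_sgn_le: "norm (sgn v) \<le> 1" for v :: 'a
    by (simp add: norm_sgn)
  show ?thesis
    using norm_triangle_ineq4[of "sgn u" "sgn x"] norm_sgn_le[of u] norm_sgn_le[of x] by linarith
qed

lemma norm_sgn_add_diff_le:
  fixes x y :: "'a :: real_normed_vector"
  assumes "x \<noteq> 0"
  shows "norm (sgn (x + y) - sgn x) \<le> 2 * norm y / norm x"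
proof -
  let ?u = "x + y"
  have "sgn ?u - sgn x = (1 / norm ?u - 1 / norm x) *\<^sub>R ?u + (1 / norm x) *\<^sub>R y"
    by (simp add: sgn_div_norm algebra_simps divide_inverse)
  then have "norm (sgn ?u - sgn x) \<le> \<bar>1 / norm ?u - 1 / norm x\<bar> * norm ?u + norm y / norm x"
    using norm_triangle_ineq[of "(1 / norm ?u - 1 / norm x) *\<^sub>R ?u" "(1 / norm x) *\<^sub>R y"] by simp
  moreover have "\<bar>1 / norm ?u - 1 / norm x\<bar> * norm ?u \<le> \<bar>norm x - norm ?u\<bar> / norm x"
  proof (cases "?u = 0")
    case False
    then have "(1 / norm ?u - 1 / norm x) * norm ?u = (norm x - norm ?u) / norm x"
      using assms by (simp add: field_simps)
    then show ?thesis
      by (metis abs_divide abs_mult abs_norm_cancel order.refl)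
  qed simp
  moreover have "\<bar>norm x - norm ?u\<bar> / norm x \<le> norm y / norm x"
    using norm_triangle_ineq3[of x ?u] by (simp add: divide_right_mono)
  moreover have "2 * norm y / norm x = norm y / norm x + norm y / norm x"
    by (simp add: add_divide_distrib[symmetric])
  ultimately show ?thesis
    by linarith
qed

text \<open>On the shell \<open>r / 2^(k+1) \<le> t < r / 2^k\<close> the bound \<open>2 a / t\<close> is at most
  \<open>2 a 2^(k+1) / r\<close>; below \<open>r / 2^K\<close> only the trivial bound \<open>2\<close> is used.\<close>

definition dyadic_majorant :: "nat \<Rightarrow> real \<Rightarrow> real \<Rightarrow> real \<Rightarrow> real" where
  "dyadic_majorant K a r t =
     2 * a / r + (\<Sum>k<K. 2 * a * 2 ^ (k + 1) / r * indicator {..<r / 2 ^ k} t)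
     + 2 * indicator {..<r / 2 ^ K} t"

lemma inverse_le_dyadic_sum:
  fixes r t :: real
  assumes r: "0 < r" and t: "r / 2 ^ K \<le> t"
  shows "1 / t \<le> 1 / r + (\<Sum>k<K. 2 ^ (k + 1) / r * indicator {..<r / 2 ^ k} t)"
  using t
proof (induction K)
  case 0
  then show ?case using r by (simp add: frac_le)
next
  case (Suc K)
  have sum_nonneg: "0 \<le> (\<Sum>k<K. 2 ^ (k + 1) / r * indicator {..<r / 2 ^ k} t)"
    using r by (intro sum_nonneg) auto
  show ?case
  proof (cases "r / 2 ^ K \<le> t")
    case True
    then show ?thesis using Suc.IH r by simp
  next
    case False
    have "0 < r / 2 ^ Suc K"
      using r by simp
    then have "0 < t"
      using Suc.prems by linarith
    then have "1 / t \<le> 2 ^ (K + 1) / r"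
      using Suc.prems r by (simp add: field_simps)
    moreover have "0 < 1 / r" using r by simp
    moreover have "(\<Sum>k<Suc K. 2 ^ (k + 1) / r * indicator {..<r / 2 ^ k} t)
        = (\<Sum>k<K. 2 ^ (k + 1) / r * indicator {..<r / 2 ^ k} t) + 2 ^ (K + 1) / r"
      using False by simp
    ultimately show ?thesis using sum_nonneg by linarith
  qed
qed

lemma le_dyadic_majorant:
  assumes a: "0 \<le> a" and r: "0 < r" and t: "0 \<le> t"
    and le_2: "z \<le> 2" and le_ratio: "0 < t \<Longrightarrow> z \<le> 2 * a / t"
  shows "z \<le> dyadic_majorant K a r t"
proof -
  let ?S = "\<Sum>k<K. 2 * a * 2 ^ (k + 1) / r * indicator {..<r / 2 ^ k} t"
  have "0 \<le> ?S" using a r by (intro sum_nonneg) auto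
  have "0 \<le> 2 * a / r" using a r by simp
  show ?thesis
  proof (cases "t < r / 2 ^ K")
    case True
    then show ?thesis using \<open>0 \<le> ?S\<close> \<open>0 \<le> 2 * a / r\<close> le_2 by (simp add: dyadic_majorant_def)
  next
    case False
    moreover have "0 < r / 2 ^ K"
      using r by simp
    ultimately have "0 < t"
      by linarith
    have "2 * a / t = 2 * a * (1 / t)" by simp
    also have "\<dots> \<le> 2 * a * (1 / r + (\<Sum>k<K. 2 ^ (k + 1) / r * indicator {..<r / 2 ^ k} t))"
      using False r a by (intro mult_left_mono inverse_le_dyadic_sum) auto
    also have "\<dots> = 2 * a / r + ?S"
      by (simp add: distrib_left sum_distrib_left mult.assoc)
    finally show ?thesis
      using le_ratio[OF \<open>0 < t\<close>] False by (simp add: dyadic_majorant_def)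
  qed
qed

lemma (in prob_space) integral_dyadic_majorant_le:
  assumes [measurable]: "X \<in> borel_measurable M"
    and small_ball: "\<And>\<rho>. 0 < \<rho> \<Longrightarrow> prob {x \<in> space M. X x < \<rho>} \<le> c * \<rho>\<^sup>2"
    and a: "0 \<le> a" and r: "0 < r"
  shows "integrable M (\<lambda>x. dyadic_majorant K a r (X x))"
    and "(\<integral>x. dyadic_majorant K a r (X x) \<partial>M) \<le> 2 * a / r + 8 * a * c * r + 2 * c * r\<^sup>2 / 4 ^ K"
proof -
  define P where "P \<rho> = prob {x \<in> space M. X x < \<rho>}" for \<rho>
  have ind_eq: "indicator {..<\<rho>} (X x) = indicator {x \<in> space M. X x < \<rho>} x" if "x \<in> space M" for x \<rho>
    using that by (simp add: indicator_def)
  have sublevel_sets: "{x \<in> space M. X x < \<rho>} \<in> sets M" for \<rho>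
    by measurable
  have ind_integrable: "integrable M (\<lambda>x. indicator {..<\<rho>} (X x) :: real)" for \<rho>
    using sublevel_sets
    by (subst Bochner_Integration.integrable_cong[OF refl ind_eq]) (auto simp: less_top[symmetric])
  have ind_integral: "(\<integral>x. indicator {..<\<rho>} (X x) \<partial>M) = P \<rho>" for \<rho>
    by (subst Bochner_Integration.integral_cong[OF refl ind_eq]) (auto simp: P_def)
  show "integrable M (\<lambda>x. dyadic_majorant K a r (X x))"
    unfolding dyadic_majorant_def by (simp add: ind_integrable)
  have "(\<integral>x. dyadic_majorant K a r (X x) \<partial>M)
      = 2 * a / r + (\<Sum>k<K. 2 * a * 2 ^ (k + 1) / r * P (r / 2 ^ k)) + 2 * P (r / 2 ^ K)"
    unfolding dyadic_majorant_def
    by (simp add: ind_integrable ind_integral prob_space)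
  also have "\<dots> \<le> 2 * a / r + (\<Sum>k<K. 4 * a * c * r * (1 / 2) ^ k) + 2 * c * r\<^sup>2 / 4 ^ K"
  proof -
    have "P (r / 2 ^ k) \<le> c * (r / 2 ^ k)\<^sup>2" for k
      unfolding P_def using r by (intro small_ball) auto
    then have "2 * a * 2 ^ (k + 1) / r * P (r / 2 ^ k) \<le> 2 * a * 2 ^ (k + 1) / r * (c * (r / 2 ^ k)\<^sup>2)" for k
      using a r by (intro mult_left_mono) auto
    also have "2 * a * 2 ^ (k + 1) / r * (c * (r / 2 ^ k)\<^sup>2) = 4 * a * c * r * (1 / 2) ^ k" for k
      using r by (simp add: power2_eq_square power_divide field_simps)
    finally have "2 * a * 2 ^ (k + 1) / r * P (r / 2 ^ k) \<le> 4 * a * c * r * (1 / 2) ^ k" for k .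
    moreover have "2 * P (r / 2 ^ K) \<le> 2 * c * r\<^sup>2 / 4 ^ K"
      using \<open>P (r / 2 ^ K) \<le> c * (r / 2 ^ K)\<^sup>2\<close>
      by (simp add: power_divide power2_eq_square flip: power_mult_distrib)
    ultimately show ?thesis
      by (intro add_mono sum_mono order.refl)
  qed
  also have "(\<Sum>k<K. 4 * a * c * r * (1 / 2) ^ k) \<le> 8 * a * c * r"
  proof -
    have "0 \<le> c" using order.trans[OF measure_nonneg small_ball[of 1]] by simp
    have "(\<Sum>k<K. (1 / 2 :: real) ^ k) \<le> 2"
      by (simp add: geometric_sum)
    then have "4 * a * c * r * (\<Sum>k<K. (1 / 2) ^ k) \<le> 4 * a * c * r * 2"
      using \<open>0 \<le> c\<close> a r by (intro mult_left_mono) auto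
    then show ?thesis
      by (simp add: sum_distrib_left)
  qed
  finally show "(\<integral>x. dyadic_majorant K a r (X x) \<partial>M) \<le> 2 * a / r + 8 * a * c * r + 2 * c * r\<^sup>2 / 4 ^ K"
    by simp
qed

lemma exp_le_1_plus_9_mult:
  fixes z :: real
  assumes "0 \<le> z" "z \<le> 2"
  shows "exp z \<le> 1 + 9 * z"
proof -
  have "(1 - z) * exp z \<le> exp (- z) * exp z"
    using exp_ge_add_one_self[of "- z"] by (intro mult_right_mono) auto
  then have "exp z \<le> 1 + z * exp z"
    by (simp add: exp_minus field_simps)
  moreover have "exp z \<le> 9"
  proof -
    have "exp z \<le> exp 1 * exp 1"
      using assms by (simp flip: exp_add)
    also have "\<dots> \<le> 3 * 3"
      using exp_le by (intro mult_mono) auto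
    finally show ?thesis by simp
  qed
  ultimately show ?thesis
    using mult_left_mono[of "exp z" 9 z] assms by linarith
qed

lemma nn_integral_exp_phase_diff_le:
  assumes m: "0 < m"
  shows "(\<integral>\<^sup>+ z. exp (cmod (phase (z + w) - phase z)) \<partial>complex_normal (1 / real m))
    \<le> exp (9 * (34 * cmod w * sqrt (real m) + 8 / 4 ^ K))"
proof -
  let ?M = "complex_normal (1 / real m)"
  interpret prob_space ?M
    using m by (intro prob_space_complex_normal) auto
  define s where "s = sqrt (real m)"
  have "0 < s" and s_sq: "s * s = real m"
    using m by (simp_all add: s_def)
  let ?Z = "\<lambda>z. cmod (phase (z + w) - phase z)"
  let ?D = "\<lambda>z. dyadic_majorant K (cmod w) (1 / s) (cmod z)"
  have small_ball: "prob {z \<in> space ?M. cmod z < \<rho>} \<le> 4 * real m * \<rho>\<^sup>2" if "0 < \<rho>" for \<rho>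
  proof -
    have "prob {z \<in> space ?M. cmod z < \<rho>} \<le> 4 * \<rho>\<^sup>2 * real m / pi"
      using measure_complex_normal_disc_le[of "1 / real m" \<rho>] m that by simp
    also have "\<dots> \<le> 4 * \<rho>\<^sup>2 * real m / 1"
      using pi_gt3 by (intro divide_left_mono) auto
    finally show ?thesis by (simp add: algebra_simps)
  qed
  have "norm \<in> borel_measurable ?M"
    by measurable
  note dyadic = integral_dyadic_majorant_le[OF this, where c = "4 * real m" and a = "cmod w" and r = "1 / s"]
  have D_integrable: "integrable ?M ?D"
    using small_ball \<open>0 < s\<close> by (intro dyadic(1)) auto
  have D_integral: "(\<integral>z. ?D z \<partial>?M)
      \<le> 2 * cmod w / (1 / s) + 8 * cmod w * (4 * real m) * (1 / s) + 2 * (4 * real m) * (1 / s)\<^sup>2 / 4 ^ K"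
    using small_ball \<open>0 < s\<close> by (intro dyadic(2)) auto
  have Z_le_D: "?Z z \<le> ?D z" for z
    using \<open>0 < s\<close> norm_sgn_add_diff_le[of z w]
    by (intro le_dyadic_majorant) (auto simp: phase_eq_sgn norm_sgn_diff_le_2 add.commute)
  have "(\<integral>\<^sup>+ z. exp (?Z z) \<partial>?M) \<le> (\<integral>\<^sup>+ z. ennreal (1 + 9 * ?D z) \<partial>?M)"
    using Z_le_D
    by (intro nn_integral_mono ennreal_leI order.trans[OF exp_le_1_plus_9_mult])
      (auto simp: phase_eq_sgn norm_sgn_diff_le_2)
  also have "\<dots> = ennreal (\<integral>z. 1 + 9 * ?D z \<partial>?M)"
    using D_integrable order.trans[OF norm_ge_zero Z_le_D] by (intro nn_integral_eq_integral) auto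
  also have "(\<integral>z. 1 + 9 * ?D z \<partial>?M) = 1 + 9 * (\<integral>z. ?D z \<partial>?M)"
    using D_integrable prob_space by simp
  also have "\<dots> \<le> 1 + 9 * (34 * cmod w * s + 8 / 4 ^ K)"
  proof -
    have "2 * cmod w / (1 / s) + 8 * cmod w * (4 * real m) * (1 / s) + 2 * (4 * real m) * (1 / s)\<^sup>2 / 4 ^ K
        = 34 * cmod w * s + 8 / 4 ^ K"
      using \<open>0 < s\<close> by (simp add: power2_eq_square field_simps flip: s_sq)
    from D_integral[unfolded this] show ?thesis
      by simp
  qed
  also have "\<dots> \<le> exp (9 * (34 * cmod w * s + 8 / 4 ^ K))"
    by (rule exp_ge_add_one_self)
  finally show ?thesis
    by (simp add: s_def ennreal_leI)
qed

lemma measure_PiM_sum_tail_le: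
  fixes M :: "'a measure" and f :: "'i \<Rightarrow> 'a \<Rightarrow> real"
  assumes M: "prob_space M" and I: "finite I"
    and f: "\<And>i. i \<in> I \<Longrightarrow> f i \<in> borel_measurable M"
    and mgf: "\<And>i. i \<in> I \<Longrightarrow> (\<integral>\<^sup>+ z. exp (f i z) \<partial>M) \<le> exp (b i)"
  shows "measure (\<Pi>\<^sub>M i\<in>I. M) {x \<in> space (\<Pi>\<^sub>M i\<in>I. M). T \<le> (\<Sum>i\<in>I. f i (x i))}
    \<le> exp ((\<Sum>i\<in>I. b i) - T)"
proof -
  let ?P = "\<Pi>\<^sub>M i\<in>I. M"
  let ?S = "\<lambda>x. \<Sum>i\<in>I. f i (x i)"
  interpret P: prob_space ?P
    using M by (intro prob_space_PiM)
  interpret product_sigma_finite "\<lambda>_. M"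
    using M by (simp add: product_sigma_finite_def prob_space_imp_sigma_finite)
  have [measurable]: "?S \<in> borel_measurable ?P"
    using f by (intro borel_measurable_sum measurable_compose[OF measurable_component_singleton]) auto
  have "(\<integral>\<^sup>+ x. ennreal (exp (?S x)) * indicator (space ?P) x \<partial>?P)
      = (\<integral>\<^sup>+ x. (\<Prod>i\<in>I. ennreal (exp (f i (x i)))) \<partial>?P)"
    using I by (intro nn_integral_cong) (simp add: exp_sum prod_ennreal)
  also have "\<dots> = (\<Prod>i\<in>I. \<integral>\<^sup>+ z. exp (f i z) \<partial>M)"
    using I f by (intro product_nn_integral_prod) auto
  also have "\<dots> \<le> (\<Prod>i\<in>I. ennreal (exp (b i)))"
    using mgf by (intro prod_mono_ennreal)
  also have "\<dots> = ennreal (exp (\<Sum>i\<in>I. b i))"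
    using I by (simp add: exp_sum prod_ennreal)
  finally have mgf_sum: "(\<integral>\<^sup>+ x. ennreal (exp (?S x)) * indicator (space ?P) x \<partial>?P)
      \<le> ennreal (exp (\<Sum>i\<in>I. b i))" .
  have "emeasure ?P {x \<in> space ?P. T \<le> ?S x}
      \<le> ennreal (exp (- T)) * (\<integral>\<^sup>+ x. ennreal (exp (?S x)) * indicator (space ?P) x \<partial>?P)"
    using Chernoff_ineq_nn_integral_ge[of 1 "space ?P" ?P ?S T] by simp
  also have "\<dots> \<le> ennreal (exp (- T)) * ennreal (exp (\<Sum>i\<in>I. b i))"
    using mgf_sum by (rule mult_left_mono) simp
  also have "\<dots> = ennreal (exp ((\<Sum>i\<in>I. b i) - T))"
    by (simp flip: ennreal_mult exp_add)
  finally have "emeasure ?P {x \<in> space ?P. T \<le> ?S x} \<le> ennreal (exp ((\<Sum>i\<in>I. b i) - T))" .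
  then show ?thesis
    by (simp add: P.emeasure_eq_measure)
qed

lemma sum_norm_le_sqrt_mult_norm2: "(\<Sum>i<m. cmod (y i)) \<le> sqrt (real m) * norm2 m y"
  using L2_set_mult_ineq[of "\<lambda>_. 1" "\<lambda>i. cmod (y i)" "{..<m}"]
  by (simp add: norm2_def L2_set_def)

lemma measurable_phase_deviation [measurable]:
  "(\<lambda>x. norm1 m (\<lambda>i. phase (x i + y i) - phase (x i))) \<in> borel_measurable (gauss_vec m)"
  unfolding norm1_def gauss_vec_def phase_eq_sgn by measurable

lemma measure_phase_deviation_tail_le:
  assumes m: "0 < m"
  shows "measure (gauss_vec m)
      {x \<in> space (gauss_vec m). T \<le> norm1 m (\<lambda>i. phase (x i + y i) - phase (x i))}
    \<le> exp (306 * real m * norm2 m y + 72 - T)"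
proof -
  let ?b = "\<lambda>i. 9 * (34 * cmod (y i) * sqrt (real m) + 8 / 4 ^ m)"
  have tail: "measure (gauss_vec m)
      {x \<in> space (gauss_vec m). T \<le> (\<Sum>i<m. cmod (phase (x i + y i) - phase (x i)))}
    \<le> exp ((\<Sum>i<m. ?b i) - T)"
    unfolding gauss_vec_def using m
    by (intro measure_PiM_sum_tail_le prob_space_complex_normal nn_integral_exp_phase_diff_le)
      (auto simp: phase_eq_sgn)
  have "(\<Sum>i<m. ?b i) \<le> 306 * real m * norm2 m y + 72"
  proof -
    have "real m \<le> 4 ^ m"
      using less_exp[of m] power_mono[of 2 4 m] by (simp add: of_nat_less_numeral_power_cancel_iff)
    then have "72 * real m / 4 ^ m \<le> 72"
      by (simp add: field_simps)
    moreover have "306 * sqrt (real m) * (\<Sum>i<m. cmod (y i)) \<le> 306 * sqrt (real m) * (sqrt (real m) * norm2 m y)"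
      by (intro mult_left_mono sum_norm_le_sqrt_mult_norm2) auto
    moreover have "306 * sqrt (real m) * (sqrt (real m) * norm2 m y) = 306 * real m * norm2 m y"
      by (simp flip: mult.assoc)
    moreover have "(\<Sum>i<m. ?b i) = (\<Sum>i<m. 306 * sqrt (real m) * cmod (y i) + 72 / 4 ^ m)"
      by (simp add: algebra_simps)
    moreover have "\<dots> = 306 * sqrt (real m) * (\<Sum>i<m. cmod (y i)) + 72 * real m / 4 ^ m"
      by (simp add: sum.distrib sum_distrib_left)
    ultimately show ?thesis
      by linarith
  qed
  then have "exp ((\<Sum>i<m. ?b i) - T) \<le> exp (306 * real m * norm2 m y + 72 - T)"
    by simp
  with tail show ?thesis
    unfolding norm1_def by linarith
qed

lemma deviation_threshold_le:
  fixes b :: real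
  assumes n: "3 \<le> n" and nm: "n \<le> m" and b: "0 \<le> b"
  shows "306 * real m * b + 72 + real n / 6 \<le> 400 * ln (real m) * max b (real n / real m) * real m"
proof -
  have "0 < real m" using n nm by simp
  let ?mx = "real m * max b (real n / real m)"
  have mb: "real m * b \<le> ?mx"
    using \<open>0 < real m\<close> by (intro mult_left_mono) auto
  have "real n = real m * (real n / real m)"
    using \<open>0 < real m\<close> by simp
  also have "\<dots> \<le> ?mx"
    using \<open>0 < real m\<close> by (intro mult_left_mono) auto
  finally have "real n \<le> ?mx" .
  then have "306 * real m * b + 72 + real n / 6 \<le> 331 * ?mx"
    using mb n by linarith
  also have "\<dots> \<le> 400 * ln (real m) * ?mx"
  proof -
    have "exp 1 \<le> real m"
      using exp_le n nm by linarith
    then have "1 \<le> ln (real m)"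
      using \<open>0 < real m\<close> by (simp add: ln_ge_iff)
    then show ?thesis
      using b \<open>0 < real m\<close> by (intro mult_right_mono) auto
  qed
  finally show ?thesis
    by (simp add: algebra_simps)
qed

lemma measure_phase_deviation_bounded_ge:
  assumes n: "3 \<le> n" and nm: "n \<le> m"
  shows "measure (gauss_vec m)
      {x \<in> space (gauss_vec m).
         norm1 m (\<lambda>i. phase (x i + y i) - phase (x i)) / real m
           \<le> 400 * ln (real m) * max (norm2 m y) (real n / real m)}
    \<ge> 1 - real m * exp (- real n / 6)"
proof -
  have m: "0 < m" using n nm by simp
  let ?G = "gauss_vec m"
  let ?dev = "\<lambda>x. norm1 m (\<lambda>i. phase (x i + y i) - phase (x i))"
  let ?R = "400 * ln (real m) * max (norm2 m y) (real n / real m)"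
  interpret prob_space ?G
    unfolding gauss_vec_def using m by (intro prob_space_PiM prob_space_complex_normal) auto
  have "prob {x \<in> space ?G. ?R * real m < ?dev x} \<le> prob {x \<in> space ?G. ?R * real m \<le> ?dev x}"
    by (intro finite_measure_mono) auto
  also have "\<dots> \<le> exp (- real n / 6)"
  proof -
    have "0 \<le> norm2 m y"
      by (simp add: norm2_def sum_nonneg)
    then have "306 * real m * norm2 m y + 72 - ?R * real m \<le> - real n / 6"
      using deviation_threshold_le[OF n nm] by fastforce
    then show ?thesis
      using measure_phase_deviation_tail_le[OF m, of "?R * real m" y] by (meson exp_le_cancel_iff order.trans)
  qed
  also have "\<dots> \<le> real m * exp (- real n / 6)"
    using m by simp
  finally have "prob {x \<in> space ?G. ?R * real m < ?dev x} \<le> real m * exp (- real n / 6)" .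
  moreover have "prob {x \<in> space ?G. ?dev x / real m \<le> ?R} = 1 - prob {x \<in> space ?G. ?R * real m < ?dev x}"
    using m by (subst prob_neg[symmetric]) (auto simp: divide_le_eq not_less)
  ultimately show ?thesis
    by simp
qed

theorem lemma2:
  "\<exists>C>0. \<exists>N::nat. \<forall>n m::nat. N \<le> n \<longrightarrow> n \<le> m \<longrightarrow>
     (\<forall>y :: nat \<Rightarrow> complex.
        measure (gauss_vec m)
          {x \<in> space (gauss_vec m).
             norm1 m (\<lambda>i. phase (x i + y i) - phase (x i)) / real m
               \<le> C * ln (real m) * max (norm2 m y) (real n / real m)}
        \<ge> 1 - real m * exp (- real n / 6))"
  by (intro exI[of _ 400] conjI exI[of _ 3] allI impI measure_phase_deviation_bounded_ge) simp_all

end
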